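(* For the Ewens distribution $p^\star$, $p^\star_N(\pi)=\frac{\prod_{B\in\pi}(b-1)!}{n!}$, the restriction operator $r^\star:=r^{p^\star}$ is given by $$w^{r^\star}_{-i}(S,\pi)=\frac{1}{n-s}w(S,\pi_{+i\leadsto\emptyset})+\sum_{B\in\pi}\frac{b}{n-s}w(S,\pi_{+i\leadsto B})$$ for all $N\subseteq\mathbf{U}$, $w\in\mathbb{W}(N)$, $i\in N$, $(S,\pi)\in\mathcal{E}(N\setminus\{i\})$. Moreover, the $r^\star$-Shapley value coincides with the MPW solution: $\mathrm{Sh}^{r^\star}=\mathrm{MPW}$.
   Context: $\mathbf{U}$ is a finite set of players; cardinalities of $N,S,B$ are $n,s,b$. $\Pi(N)$ is the set of partitions of $N$ ($\Pi(\emptyset)=\{\emptyset\}$). A random partition is $p=(p_N)_{N\subseteq\mathbf{U}}$ with $p_N$ a probability distribution on $\Pi(N)$. $\pi_{+i\leadsto B}=(\pi\setminus\{B\})\cup\{B\cup\{i\}\}$ for $B\in\pi$; $\pi_{+i\leadsto\emptyset}=\pi\cup\{\{i\}\}$. Embedded coalitions $\mathcal{E}(N)=\{(S,\pi):S\subseteq N,\pi\in\Pi(N\setminus S)\}$; a TUX game on $N$ is $w:\mathcal{E}(N)\to\mathbb{R}$ with $w(\emptyset,\pi)=0$, $\mathbb{W}(N)$ their set. For a positive random partition $p$, $r^p$ is the restriction operator $w^{r^p}_{-i}(S,\pi)=\frac{n}{n-s}\sum_{B\in\pi\cup\{\emptyset\}}\frac{p_N(\{S\}\cup\pi_{+i\leadsto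 B})}{p_{N\setminus\{i\}}(\{S\}\cup\pi)}w(S,\pi_{+i\leadsto B})$, which yields $w^{r^p}_{-i}\in\mathbb{W}(N\setminus\{i\})$ and is path independent, so $w^{r}_{-T}$ is well defined for $T\subseteq N$. The Shapley value of a TU game $v$ on $N$ is $\mathrm{Sh}_i(v)=\sum_{S\subseteq N\setminus\{i\}}\frac{s!(n-s-1)!}{n!}(v(S\cup\{i\})-v(S))$. For a path independent restriction operator $r$, the $r$-Shapley value is $\mathrm{Sh}^r(w)=\mathrm{Sh}(v^r_w)$ with $v^r_w(S)=w^r_{-(N\setminus S)}(S,\emptyset)$. The MPW solution is $\mathrm{MPW}(w)=\mathrm{Sh}(\bar v^\star_w)$ with $\bar v^\star_w(S)=\sum_{\pi\in\Pi(N\setminus S)}p^\star_{N\setminus S}(\pi)w(S,\pi)$. *)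

theory Defs
  imports Complex_Main "HOL-Library.Disjoint_Sets"
begin

definition Partitions :: "'a set \<Rightarrow> 'a set set set" where
  "Partitions N = {\<pi>. partition_on N \<pi>}"

(* random partition: p N \<pi> is the probability of \<pi> in Pi(N) *)
type_synonym 'a rpart = "'a set \<Rightarrow> 'a set set \<Rightarrow> real"

definition random_partition :: "'a set \<Rightarrow> 'a rpart \<Rightarrow> bool" where
  "random_partition U p \<longleftrightarrow> (\<forall>N \<subseteq> U. (\<forall>\<pi>. p N \<pi> \<noteq> 0 \<longrightarrow> \<pi> \<in> Partitions N)
      \<and> (\<forall>\<pi> \<in> Partitions N. p N \<pi> \<ge> 0) \<and> (\<Sum>\<pi>\<in>Partitions N. p N \<pi>) = 1)"

definition positive_random_partition :: "'a set \<Rightarrow> 'a rpart \<Rightarrow> bool" where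
  "positive_random_partition U p \<longleftrightarrow> random_partition U p \<and>
      (\<forall>N \<subseteq> U. \<forall>\<pi> \<in> Partitions N. p N \<pi> > 0)"

definition ewens :: "'a rpart" where
  "ewens N \<pi> = (if \<pi> \<in> Partitions N
      then (\<Prod>B\<in>\<pi>. fact (card B - 1)) / fact (card N) else 0)"

definition add_to :: "'a set set \<Rightarrow> 'a \<Rightarrow> 'a set \<Rightarrow> 'a set set" where
  "add_to \<pi> i B = (if B = {} then insert {i} \<pi> else insert (insert i B) (\<pi> - {B}))"

definition Embedded :: "'a set \<Rightarrow> ('a set \<times> 'a set set) set" where
  "Embedded N = {(S, \<pi>). S \<subseteq> N \<and> \<pi> \<in> Partitions (N - S)}"

(* TUX games: functions on embedded coalitions, values outside E(N) are irrelevant *)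
type_synonym 'a tux = "'a set \<Rightarrow> 'a set set \<Rightarrow> real"

definition tux_game :: "'a set \<Rightarrow> 'a tux \<Rightarrow> bool" where
  "tux_game N w \<longleftrightarrow> (\<forall>\<pi> \<in> Partitions N. w {} \<pi> = 0)"

definition restr :: "'a rpart \<Rightarrow> 'a set \<Rightarrow> 'a tux \<Rightarrow> 'a \<Rightarrow> 'a tux" where
  "restr p N w i = (\<lambda>S \<pi>. real (card N) / real (card N - card S) *
     (\<Sum>B \<in> insert {} \<pi>. p N (insert S (add_to \<pi> i B)) / p (N - {i}) (insert S \<pi>)
                          * w S (add_to \<pi> i B)))"

fun restr_list :: "'a rpart \<Rightarrow> 'a set \<Rightarrow> 'a tux \<Rightarrow> 'a list \<Rightarrow> 'a tux" where
  "restr_list p N w [] = w"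
| "restr_list p N w (i # is) = restr_list p (N - {i}) (restr p N w i) is"

(* w^r_{-T}: well defined by path independence; we use an arbitrary enumeration of T *)
definition restr_set :: "'a rpart \<Rightarrow> 'a set \<Rightarrow> 'a tux \<Rightarrow> 'a set \<Rightarrow> 'a tux" where
  "restr_set p N w T = restr_list p N w (SOME xs. set xs = T \<and> distinct xs)"

definition shapley :: "'a set \<Rightarrow> ('a set \<Rightarrow> real) \<Rightarrow> 'a \<Rightarrow> real" where
  "shapley N v i = (\<Sum>S \<in> Pow (N - {i}).
      fact (card S) * fact (card N - card S - 1) / fact (card N) * (v (insert i S) - v S))"

definition restricted_tu :: "'a rpart \<Rightarrow> 'a set \<Rightarrow> 'a tux \<Rightarrow> 'a set \<Rightarrow> real" where
  "restricted_tu p N w S = restr_set p N w (N - S) S {}"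

definition r_shapley :: "'a rpart \<Rightarrow> 'a set \<Rightarrow> 'a tux \<Rightarrow> 'a \<Rightarrow> real" where
  "r_shapley p N w = shapley N (restricted_tu p N w)"

definition mpw_tu :: "'a set \<Rightarrow> 'a tux \<Rightarrow> 'a set \<Rightarrow> real" where
  "mpw_tu N w S = (\<Sum>\<pi> \<in> Partitions (N - S). ewens (N - S) \<pi> * w S \<pi>)"

definition MPW :: "'a set \<Rightarrow> 'a tux \<Rightarrow> 'a \<Rightarrow> real" where
  "MPW N w = shapley N (mpw_tu N w)"

end

theory Submission
  imports Defs
begin

text \<open>
  Under the Ewens distribution (the cycle partition of a uniformly random permutation) a new
  player i joins a partition P of M - {i} as a singleton with probability 1/|M| and joins the
  block B with probability |B|/|M|. Adding the coalition S as an extra block commutes with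
  inserting i, so the probability ratio in the restriction operator is exactly this insertion
  probability, which is the explicit formula. Averaging that formula against the Ewens
  distribution on M - {i} and reindexing along the bijection (P, B) \<mapsto> P with i added to B,
  onto the partitions of M, shows that one restriction step preserves the Ewens average
  S \<mapsto> \<Sum>\<pi>. p(\<pi>) w(S, \<pi>). Iterating, the restricted TU game is the MPW game,
  so the two Shapley values agree.
\<close>

lemma partition_on_Diff_block:
  assumes "partition_on A P" "B \<in> P"
  shows "partition_on (A - B) (P - {B})"
  using assms unfolding partition_on_def disjoint_def by blast

lemma partition_on_add_to:
  assumes "partition_on (M - {i}) P" "i \<in> M" "B \<in> insert {} P"
  shows "partition_on M (add_to P i B)"
proof (cases "B = {}")
  case True
  have "disjnt {i} (\<Union>P)"
    using partition_onD1[OF assms(1)] by (auto simp: disjnt_def)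
  then show ?thesis
    using True assms by (simp add: add_to_def partition_on_insert)
next
  case False
  then have B: "B \<in> P" using assms(3) by auto
  have "partition_on (M - insert i B) (P - {B})"
    using partition_on_Diff_block[OF assms(1) B] by (metis Diff_insert2)
  moreover have "disjnt (insert i B) (\<Union>(P - {B}))"
    using partition_onD1[OF assms(1)] partition_onD2[OF assms(1)] B
    by (auto simp: disjnt_def disjoint_def)
  moreover have "insert i B \<subseteq> M"
    using assms(2) B partition_onD1[OF assms(1)] by auto
  ultimately show ?thesis
    using False by (simp add: add_to_def partition_on_insert)
qed

definition remove_from :: "'a set set \<Rightarrow> 'a \<Rightarrow> 'a set set" where
  "remove_from Q i = (\<lambda>C. C - {i}) ` Q - {{}}"

definition block_mates :: "'a set set \<Rightarrow> 'a \<Rightarrow> 'a set" where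
  "block_mates Q i = \<Union>{C \<in> Q. i \<in> C} - {i}"

lemma
  assumes "partition_on (M - {i}) P" "B \<in> insert {} P"
  shows remove_from_add_to: "remove_from (add_to P i B) i = P"
    and block_mates_add_to: "block_mates (add_to P i B) i = B"
proof -
  have ni: "\<And>C. C \<in> P \<Longrightarrow> i \<notin> C" using partition_onD1[OF assms(1)] by auto
  have ne: "{} \<notin> P" using partition_onD3[OF assms(1)] .
  have "(\<lambda>C. C - {i}) ` add_to P i B = insert B P \<and> {C \<in> add_to P i B. i \<in> C} = {insert i B}"
  proof (cases "B = {}")
    case True
    have "(\<lambda>C. C - {i}) ` P = P" using ni by (force simp: image_iff)
    then show ?thesis using True ni by (auto simp: add_to_def)
  next
    case False
    then have "B \<in> P" using assms(2) by auto
    moreover have "(\<lambda>C. C - {i}) ` (P - {B}) = P - {B}" using ni by (force simp: image_iff)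
    moreover have "insert i B - {i} = B" using ni \<open>B \<in> P\<close> by blast
    ultimately show ?thesis using False ni by (auto simp: add_to_def)
  qed
  then show "remove_from (add_to P i B) i = P" "block_mates (add_to P i B) i = B"
    using ne assms(2) unfolding remove_from_def block_mates_def by auto
qed

lemma partition_on_remove_from:
  assumes "partition_on M Q"
  shows "partition_on (M - {i}) (remove_from Q i)"
proof -
  have "partition_on ((\<lambda>C. C - {i}) M) ((\<lambda>C. C - {i}) ` Q - {{}})"
    by (rule partition_on_transform[OF assms]) (auto simp: disjnt_def)
  then show ?thesis by (simp add: remove_from_def)
qed

lemma
  assumes "partition_on M Q" "i \<in> M"
  shows block_mates_in_remove_from: "block_mates Q i \<in> insert {} (remove_from Q i)"
    and add_to_remove_from: "add_to (remove_from Q i) i (block_mates Q i) = Q"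
proof -
  obtain C where C: "C \<in> Q" "i \<in> C" using assms partition_onD1 by blast
  have other: "\<And>D. D \<in> Q \<Longrightarrow> D \<noteq> C \<Longrightarrow> i \<notin> D"
    using partition_onD2[OF assms(1)] C by (auto simp: disjoint_def)
  have ne: "{} \<notin> Q" using partition_onD3[OF assms(1)] .
  have mates: "block_mates Q i = C - {i}"
    using C other unfolding block_mates_def by blast
  have "\<forall>D \<in> Q - {C}. D - {i} = D" using other by blast
  then have "(\<lambda>D. D - {i}) ` (Q - {C}) = Q - {C}" by simp
  moreover have "Q = insert C (Q - {C})" using C by blast
  ultimately have "(\<lambda>D. D - {i}) ` Q = insert (C - {i}) (Q - {C})"
    by (metis image_insert)
  then have remove: "remove_from Q i = insert (C - {i}) (Q - {C}) - {{}}"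
    by (simp add: remove_from_def ne)
  show "block_mates Q i \<in> insert {} (remove_from Q i)"
    unfolding mates remove by blast
  show "add_to (remove_from Q i) i (block_mates Q i) = Q"
  proof (cases "C = {i}")
    case True
    then have "remove_from Q i = Q - {C}" using ne unfolding remove by auto
    then show ?thesis using True C by (simp add: mates add_to_def insert_absorb)
  next
    case False
    then have "C - {i} \<noteq> {}" using C by blast
    moreover have "C - {i} \<notin> Q - {C}"
    proof
      assume "C - {i} \<in> Q - {C}"
      then have "disjnt C (C - {i})"
        using pairwiseD[OF partition_onD2[OF assms(1)], of C "C - {i}"] C by blast
      with \<open>C - {i} \<noteq> {}\<close> show False by (auto simp: disjnt_def)
    qed
    ultimately have "remove_from Q i = insert (C - {i}) (Q - {C})"
      and "insert (C - {i}) (Q - {C}) - {C - {i}} = Q - {C}"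
      using ne unfolding remove by auto
    then show ?thesis using C \<open>C - {i} \<noteq> {}\<close> by (simp add: mates add_to_def insert_absorb)
  qed
qed

lemma bij_betw_add_to:
  assumes "i \<in> M"
  shows "bij_betw (\<lambda>(P, B). add_to P i B) (SIGMA P:Partitions (M - {i}). insert {} P) (Partitions M)"
proof (rule bij_betw_byWitness[where f' = "\<lambda>Q. (remove_from Q i, block_mates Q i)"])
  show "\<forall>a \<in> (SIGMA P:Partitions (M - {i}). insert {} P).
      (\<lambda>Q. (remove_from Q i, block_mates Q i)) ((\<lambda>(P, B). add_to P i B) a) = a"
    by (auto simp: Partitions_def remove_from_add_to block_mates_add_to)
  show "\<forall>Q \<in> Partitions M. (\<lambda>(P, B). add_to P i B) (remove_from Q i, block_mates Q i) = Q"
    using assms by (auto simp: Partitions_def add_to_remove_from)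
  show "(\<lambda>(P, B). add_to P i B) ` (SIGMA P:Partitions (M - {i}). insert {} P) \<subseteq> Partitions M"
    using assms partition_on_add_to by (fastforce simp: Partitions_def)
  show "(\<lambda>Q. (remove_from Q i, block_mates Q i)) ` Partitions M
      \<subseteq> (SIGMA P:Partitions (M - {i}). insert {} P)"
  proof (rule image_subsetI)
    fix Q assume "Q \<in> Partitions M"
    then show "(remove_from Q i, block_mates Q i) \<in> (SIGMA P:Partitions (M - {i}). insert {} P)"
      using partition_on_remove_from block_mates_in_remove_from[OF _ assms]
      by (simp add: Partitions_def)
  qed
qed

lemma prod_fact_add_to:
  assumes "finite M" "partition_on (M - {i}) P" "B \<in> insert {} P"
  shows "(\<Prod>C\<in>add_to P i B. fact (card C - 1) :: real)
         = (if B = {} then 1 else real (card B)) * (\<Prod>C\<in>P. fact (card C - 1))"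
proof -
  have fin: "finite P" using finite_elements[OF _ assms(2)] assms(1) by simp
  have ni: "\<And>C. C \<in> P \<Longrightarrow> i \<notin> C" using partition_onD1[OF assms(2)] by auto
  show ?thesis
  proof (cases "B = {}")
    case True
    moreover have "{i} \<notin> P" using ni by blast
    ultimately show ?thesis using fin by (simp add: add_to_def)
  next
    case False
    then have B: "B \<in> P" using assms(3) by auto
    then have "finite B"
      using assms(1) partition_onD1[OF assms(2)] by (metis Union_upper finite_Diff finite_subset)
    then have "card B \<noteq> 0" using False by simp
    then have "(fact (card B) :: real) = real (card B) * fact (card B - 1)"
      by (intro fact_reduce) simp
    moreover have "card (insert i B) - 1 = card B" using ni[OF B] \<open>finite B\<close> by simp
    moreover have "(\<Prod>C\<in>P. fact (card C - 1) :: real) = fact (card B - 1) * (\<Prod>C\<in>P - {B}. fact (card C - 1))"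
      using prod.remove[OF fin B] .
    moreover have "insert i B \<notin> P - {B}" using ni by auto
    ultimately show ?thesis using False fin by (simp add: add_to_def)
  qed
qed

lemma ewens_add_to:
  assumes "finite M" "partition_on (M - {i}) P" "i \<in> M" "B \<in> insert {} P"
  shows "ewens M (add_to P i B)
         = (if B = {} then 1 else real (card B)) / real (card M) * ewens (M - {i}) P"
proof -
  have "card M = Suc (card (M - {i}))" using assms(1,3) by (rule card_Suc_Diff1[symmetric])
  then have fact_M: "(fact (card M) :: real) = real (card M) * fact (card (M - {i}))"
    by simp
  have "ewens M (add_to P i B) = (\<Prod>C\<in>add_to P i B. fact (card C - 1)) / fact (card M)"
    using partition_on_add_to[OF assms(2-4)] by (simp add: ewens_def Partitions_def)
  also have "\<dots> = (if B = {} then 1 else real (card B)) * (\<Prod>C\<in>P. fact (card C - 1))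
                    / (real (card M) * fact (card (M - {i})))"
    by (simp only: prod_fact_add_to[OF assms(1,2,4)] fact_M)
  also have "\<dots> = (if B = {} then 1 else real (card B)) / real (card M) * ewens (M - {i}) P"
    using assms(2) by (simp add: ewens_def Partitions_def)
  finally show ?thesis .
qed

lemma ewens_pos:
  assumes "finite M" "partition_on M P"
  shows "ewens M P > 0"
  using assms by (simp add: ewens_def Partitions_def prod_pos)

lemma ewens_insert_empty: "ewens N (insert {} P) = 0"
  by (simp add: ewens_def Partitions_def partition_on_def)

lemma add_to_insert:
  assumes "S \<noteq> B"
  shows "add_to (insert S P) i B = insert S (add_to P i B)"
  using assms by (auto simp: add_to_def)

lemma restr_ewens_sum:
  assumes "finite N" "i \<in> N" "S \<subseteq> N - {i}" "partition_on (N - {i} - S) P" "tux_game N w"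
  shows "restr ewens N w i S P = (\<Sum>B\<in>insert {} P.
           (if B = {} then 1 else real (card B)) / real (card N - card S) * w S (add_to P i B))"
proof (cases "S = {}")
  case True
  \<comment> \<open>both sides vanish: every ratio in \<open>restr\<close> is 0 / 0 = 0, and w is 0 on {}\<close>
  have "partition_on (N - {i}) P" using assms(4) True by simp
  then have "add_to P i B \<in> Partitions N" if "B \<in> insert {} P" for B
    using partition_on_add_to assms(2) that by (simp add: Partitions_def)
  then show ?thesis
    using True assms(5) by (simp add: restr_def ewens_insert_empty tux_game_def)
next
  case False
  have disj: "disjnt S (\<Union>P)" using partition_onD1[OF assms(4)] by (auto simp: disjnt_def)
  then have Q: "partition_on (N - {i}) (insert S P)"
    using assms(3,4) False by (simp add: partition_on_insert)
  have "card N > 0" using assms(1,2) card_gt_0_iff by blast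
  show ?thesis
    unfolding restr_def sum_distrib_left
  proof (rule sum.cong[OF refl])
    fix B assume B: "B \<in> insert {} P"
    then have "S \<noteq> B" using disj False partition_onD3[OF assms(4)] by (auto simp: disjnt_def)
    then have "ewens N (insert S (add_to P i B))
        = (if B = {} then 1 else real (card B)) / real (card N) * ewens (N - {i}) (insert S P)"
      using ewens_add_to[OF assms(1) Q assms(2)] B by (simp add: add_to_insert[symmetric])
    moreover have "ewens (N - {i}) (insert S P) > 0" using ewens_pos Q assms(1) by blast
    ultimately show "real (card N) / real (card N - card S) * (ewens N (insert S (add_to P i B))
          / ewens (N - {i}) (insert S P) * w S (add_to P i B))
        = (if B = {} then 1 else real (card B)) / real (card N - card S) * w S (add_to P i B)"
      using \<open>card N > 0\<close> by simp
  qed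
qed

lemma restr_ewens:
  assumes "finite N" "i \<in> N" "S \<subseteq> N - {i}" "partition_on (N - {i} - S) P" "tux_game N w"
  shows "restr ewens N w i S P = 1 / real (card N - card S) * w S (add_to P i {})
           + (\<Sum>B\<in>P. real (card B) / real (card N - card S) * w S (add_to P i B))"
proof -
  have fin: "finite P" using finite_elements[OF _ assms(4)] assms(1) by simp
  have ne: "{} \<notin> P" using partition_onD3[OF assms(4)] .
  then have "(\<Sum>B\<in>P. (if B = {} then 1 else real (card B)) / real (card N - card S) * w S (add_to P i B))
      = (\<Sum>B\<in>P. real (card B) / real (card N - card S) * w S (add_to P i B))"
    by (intro sum.cong) auto
  then show ?thesis
    unfolding restr_ewens_sum[OF assms] sum.insert[OF fin ne] by simp
qed

lemma tux_game_restr_ewens: "tux_game (N - {i}) (restr ewens N w i)"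
  by (simp add: tux_game_def restr_def ewens_insert_empty)

lemma mpw_tu_restr_ewens:
  assumes "finite N" "i \<in> N" "S \<subseteq> N - {i}" "tux_game N w"
  shows "mpw_tu (N - {i}) (restr ewens N w i) S = mpw_tu N w S"
proof -
  define M where "M = N - S"
  have NS: "N - {i} - S = M - {i}" unfolding M_def by blast
  have iM: "i \<in> M" and fM: "finite M" using assms(1-3) unfolding M_def by auto
  have "S \<subseteq> N" using assms(3) by blast
  then have cM: "card N - card S = card M"
    unfolding M_def using card_Diff_subset[OF finite_subset[OF _ assms(1)]] by simp
  have "mpw_tu (N - {i}) (restr ewens N w i) S
      = (\<Sum>P\<in>Partitions (M - {i}). ewens (M - {i}) P * restr ewens N w i S P)"
    unfolding mpw_tu_def NS ..
  also have "\<dots> = (\<Sum>P\<in>Partitions (M - {i}). \<Sum>B\<in>insert {} P. ewens M (add_to P i B) * w S (add_to P i B))"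
  proof (rule sum.cong[OF refl])
    fix P assume "P \<in> Partitions (M - {i})"
    then have P: "partition_on (M - {i}) P" by (simp add: Partitions_def)
    show "ewens (M - {i}) P * restr ewens N w i S P
        = (\<Sum>B\<in>insert {} P. ewens M (add_to P i B) * w S (add_to P i B))"
      unfolding restr_ewens_sum[OF assms(1-3) P[folded NS] assms(4)] sum_distrib_left cM
      by (rule sum.cong[OF refl]) (simp add: ewens_add_to[OF fM P iM])
  qed
  also have "\<dots> = (\<Sum>(P, B)\<in>(SIGMA P:Partitions (M - {i}). insert {} P). ewens M (add_to P i B) * w S (add_to P i B))"
  proof (rule sum.Sigma)
    show "finite (Partitions (M - {i}))"
      using fM by (simp add: Partitions_def finitely_many_partition_on)
    show "\<forall>P\<in>Partitions (M - {i}). finite (insert {} P)"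
      using finite_elements fM by (auto simp: Partitions_def)
  qed
  also have "\<dots> = (\<Sum>Q\<in>Partitions M. ewens M Q * w S Q)"
    using sum.reindex_bij_betw[OF bij_betw_add_to[OF iM], of "\<lambda>Q. ewens M Q * w S Q"]
    by (simp add: case_prod_beta')
  also have "\<dots> = mpw_tu N w S" unfolding mpw_tu_def M_def ..
  finally show ?thesis .
qed

lemma mpw_tu_restr_list_ewens:
  assumes "distinct xs" "finite N" "set xs \<subseteq> N" "tux_game N w" "S \<subseteq> N - set xs"
  shows "mpw_tu (N - set xs) (restr_list ewens N w xs) S = mpw_tu N w S"
  using assms
proof (induction xs arbitrary: N w)
  case Nil
  then show ?case by simp
next
  case (Cons x xs)
  have "N - set (x # xs) = N - {x} - set xs" by auto
  then have "mpw_tu (N - set (x # xs)) (restr_list ewens N w (x # xs)) S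
      = mpw_tu (N - {x} - set xs) (restr_list ewens (N - {x}) (restr ewens N w x) xs) S"
    by simp
  also have "\<dots> = mpw_tu (N - {x}) (restr ewens N w x) S"
    using Cons.prems tux_game_restr_ewens by (intro Cons.IH) auto
  also have "\<dots> = mpw_tu N w S"
    using Cons.prems by (intro mpw_tu_restr_ewens) auto
  finally show ?case .
qed

lemma restricted_tu_ewens:
  assumes "finite N" "tux_game N w" "S \<subseteq> N"
  shows "restricted_tu ewens N w S = mpw_tu N w S"
proof -
  define xs where "xs = (SOME xs. set xs = N - S \<and> distinct xs)"
  have "\<exists>xs. set xs = N - S \<and> distinct xs"
    using assms(1) finite_distinct_list by blast
  then have "set xs = N - S \<and> distinct xs"
    unfolding xs_def by (rule someI_ex)
  then have xs: "set xs = N - S" "distinct xs" "N - set xs = S" using assms(3) by auto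
  have "restricted_tu ewens N w S = restr_list ewens N w xs S {}"
    unfolding restricted_tu_def restr_set_def xs_def ..
  also have "\<dots> = mpw_tu (N - set xs) (restr_list ewens N w xs) S"
    unfolding xs(3) by (simp add: mpw_tu_def Partitions_def partition_on_empty ewens_def)
  also have "\<dots> = mpw_tu N w S"
    using xs assms by (intro mpw_tu_restr_list_ewens) auto
  finally show ?thesis .
qed

lemma shapley_cong:
  assumes "i \<in> N" "\<And>S. S \<subseteq> N \<Longrightarrow> v S = v' S"
  shows "shapley N v i = shapley N v' i"
proof -
  have "v (insert i S) = v' (insert i S)" "v S = v' S" if "S \<subseteq> N - {i}" for S
    using that assms(1) by (intro assms(2); auto)+
  then show ?thesis unfolding shapley_def by (intro sum.cong) auto
qed

theorem lemma1:
  fixes U :: "'a set"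
  assumes "finite U"
  shows "(\<forall>N w i S \<pi>. N \<subseteq> U \<longrightarrow> tux_game N w \<longrightarrow> i \<in> N \<longrightarrow> (S, \<pi>) \<in> Embedded (N - {i}) \<longrightarrow>
            restr ewens N w i S \<pi> =
              1 / real (card N - card S) * w S (add_to \<pi> i {})
              + (\<Sum>B\<in>\<pi>. real (card B) / real (card N - card S) * w S (add_to \<pi> i B)))
      \<and> (\<forall>N w. N \<subseteq> U \<longrightarrow> tux_game N w \<longrightarrow> (\<forall>i\<in>N. r_shapley ewens N w i = MPW N w i))"
proof (intro conjI allI impI ballI)
  fix N w i S \<pi>
  assume "N \<subseteq> U" "tux_game N w" "i \<in> N" "(S, \<pi>) \<in> Embedded (N - {i})"
  then show "restr ewens N w i S \<pi> =
              1 / real (card N - card S) * w S (add_to \<pi> i {})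
              + (\<Sum>B\<in>\<pi>. real (card B) / real (card N - card S) * w S (add_to \<pi> i B))"
    using assms finite_subset
    by (intro restr_ewens) (auto simp: Embedded_def Partitions_def)
next
  fix N w i
  assume "N \<subseteq> U" "tux_game N w" "i \<in> N"
  then show "r_shapley ewens N w i = MPW N w i"
    unfolding r_shapley_def MPW_def using assms finite_subset
    by (intro shapley_cong) (auto intro: restricted_tu_ewens)
qed

end
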